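(* Consider the alternating procedure defined in the context, run for $T_r$ rounds. Then: (i) For every round $1 \le r < T_r$, $$R_{\hat{\boldsymbol{e}}^{(r+1)}}\big(\theta^{(r+1)}, \boldsymbol{\phi}^{(r+1)}\big) \le R_{\hat{\boldsymbol{e}}^{(r)}}\big(\theta^{(r)}, \boldsymbol{\phi}^{(r)}\big).$$ (ii) Suppose in addition that for every assignment $\hat{\boldsymbol{e}} \in [M]^N$ the set $\arg\min_{\theta, \boldsymbol{\phi}} R_{\hat{\boldsymbol{e}}}(\theta, \boldsymbol{\phi})$ is finite. Then there exists a constant $C > 0$ (depending only on the data $x^1,\dots,x^N$, on $h$, $\Omega$, $\lambda$, $M$, $N$, and not on $r$) such that for every round $r$ with $1 < r < T_r$, if $$R_{\hat{\boldsymbol{e}}^{(r+1)}}\big(\theta^{(r+1)}, \boldsymbol{\phi}^{(r+1)}\big) < R_{\hat{\boldsymbol{e}}^{(r)}}\big(\theta^{(r)}, \boldsymbol{\phi}^{(r)}\big),$$ then $$R_{\hat{\boldsymbol{e}}^{(r+1)}}\big(\theta^{(r+1)}, \boldsymbol{\phi}^{(r+1)}\big) \le R_{\hat{\boldsymbol{e}}^{(r)}}\big(\theta^{(r)}, \boldsymbol{\phi}^{(r)}\big) - C.$$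
   Context: Setting. Let $I=[0,T]$ be a time interval and let $x^1,\dots,x^N$ be $N$ differentiable trajectories $x^i : I \to \mathcal{A}$ (state space $\mathcal{A}$ a subset of $\mathbb{R}^d$ or a space of vector fields on a bounded spatial domain). Fix an integer $M \ge 1$ (number of assumed environments), write $[M]=\{1,\dots,M\}$. A parameterized model $h(x;\theta,\phi)$ maps a state $x$, a global parameter $\theta$ and an environment-specific parameter $\phi$ to a tangent vector; $\boldsymbol{\phi}=\{\phi_e\}_{e\in[M]}$ denotes a family of environment-specific parameters. Let $\Omega$ be a real-valued regularizer on environment-specific parameters and $\lambda \ge 0$. Per-trajectory loss: for $i\in[N]$, $e\in[M]$, $$L_i(\theta,\phi_e) = \int_{I} \Big\| \frac{dx^i_t}{dt} - h(x^i_t;\theta,\phi_e)\Big\|_2^2\,dt,$$ assumed finite for all parameters. Objective: for an environment assignment $\hat{\boldsymbol{e}} = (\hat e_1,\dots,\hat e_N) \in [M]^N$, $$R_{\hat{\boldsymbol{e}}}(\theta,\boldsymbol{\phi}) = \sum_{i=1}^N L_i(\theta,\phi_{\hat e_i}) + \lambda \sum_{e=1}^M \Omega(\phi_e).$$ It is assumed that for every $\hat{\boldsymbol{e}}\in[M]^N$ the minimum of $R_{\hat{\boldsymbol{e}}}$ over $(\theta,\boldsymbol{\phi})$ is attained. Algorithm (alternating optimization). Start from arbitrary initial parameters $\theta^{(0)},\boldsymbol{\phi}^{(0)}$ and an arbitrary $\hat{\boldsymbol{e}}^{(0)}\in[M]^N$. For rounds $r=1,2,\dots,T_r$: 1. Assignment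 step: for each $i\in[N]$, choose $\hat e_i^{(r)} \in \arg\min_{e\in[M]} L_i\big(\theta^{(r-1)},\phi_e^{(r-1)}\big)$, with the tie-breaking rule that if $\hat e_i^{(r-1)}$ belongs to this argmin set then $\hat e_i^{(r)} = \hat e_i^{(r-1)}$. 2. Parameter step: choose $(\theta^{(r)},\boldsymbol{\phi}^{(r)}) \in \arg\min_{\theta,\boldsymbol{\phi}} R_{\hat{\boldsymbol{e}}^{(r)}}(\theta,\boldsymbol{\phi})$ (an exact global minimizer; any one if several). *)

theory Defs
  imports "HOL-Analysis.Analysis"
begin

definition traj_loss ::
  "real \<Rightarrow> (real \<Rightarrow> 'a::real_normed_vector) \<Rightarrow> ('a \<Rightarrow> 'p \<Rightarrow> 'q \<Rightarrow> 'a) \<Rightarrow> 'p \<Rightarrow> 'q \<Rightarrow> real"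
  where "traj_loss T x h \<theta> \<phi> =
    integral {0..T} (\<lambda>t. (norm (vector_derivative x (at t within {0..T}) - h (x t) \<theta> \<phi>))\<^sup>2)"

definition objective ::
  "real \<Rightarrow> nat \<Rightarrow> nat \<Rightarrow> (nat \<Rightarrow> real \<Rightarrow> 'a::real_normed_vector) \<Rightarrow> ('a \<Rightarrow> 'p \<Rightarrow> 'q \<Rightarrow> 'a)
     \<Rightarrow> ('q \<Rightarrow> real) \<Rightarrow> real \<Rightarrow> (nat \<Rightarrow> nat) \<Rightarrow> 'p \<Rightarrow> (nat \<Rightarrow> 'q) \<Rightarrow> real"
  where "objective T N M x h \<Omega> lam e \<theta> \<phi> =
    (\<Sum>i=1..N. traj_loss T (x i) h \<theta> (\<phi> (e i))) + lam * (\<Sum>k=1..M. \<Omega> (\<phi> k))"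

definition param_space :: "nat \<Rightarrow> ('p \<times> (nat \<Rightarrow> 'q)) set"
  where "param_space M = {(\<theta>, \<phi>). \<phi> \<in> extensional {1..M}}"

definition argmin_R ::
  "real \<Rightarrow> nat \<Rightarrow> nat \<Rightarrow> (nat \<Rightarrow> real \<Rightarrow> 'a::real_normed_vector) \<Rightarrow> ('a \<Rightarrow> 'p \<Rightarrow> 'q \<Rightarrow> 'a)
     \<Rightarrow> ('q \<Rightarrow> real) \<Rightarrow> real \<Rightarrow> (nat \<Rightarrow> nat) \<Rightarrow> ('p \<times> (nat \<Rightarrow> 'q)) set"
  where "argmin_R T N M x h \<Omega> lam e =
    {p \<in> param_space M. \<forall>q \<in> param_space M.
       objective T N M x h \<Omega> lam e (fst p) (snd p) \<le> objective T N M x h \<Omega> lam e (fst q) (snd q)}"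

text \<open>A run of the alternating optimisation for Tr rounds:
  th r, ph r, es r are theta^(r), phi^(r), e-hat^(r) for r = 0..Tr.\<close>
definition alt_run ::
  "real \<Rightarrow> nat \<Rightarrow> nat \<Rightarrow> (nat \<Rightarrow> real \<Rightarrow> 'a::real_normed_vector) \<Rightarrow> ('a \<Rightarrow> 'p \<Rightarrow> 'q \<Rightarrow> 'a)
     \<Rightarrow> ('q \<Rightarrow> real) \<Rightarrow> real \<Rightarrow> nat
     \<Rightarrow> (nat \<Rightarrow> 'p) \<Rightarrow> (nat \<Rightarrow> nat \<Rightarrow> 'q) \<Rightarrow> (nat \<Rightarrow> nat \<Rightarrow> nat) \<Rightarrow> bool"
  where "alt_run T N M x h \<Omega> lam Tr th ph es \<longleftrightarrow>
    (\<forall>i\<in>{1..N}. es 0 i \<in> {1..M}) \<and>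
    (\<forall>r\<in>{1..Tr}. \<forall>i\<in>{1..N}.
        es r i \<in> {1..M} \<and>
        (\<forall>k\<in>{1..M}. traj_loss T (x i) h (th (r-1)) (ph (r-1) (es r i))
                      \<le> traj_loss T (x i) h (th (r-1)) (ph (r-1) k)) \<and>
        ((\<forall>k\<in>{1..M}. traj_loss T (x i) h (th (r-1)) (ph (r-1) (es (r-1) i))
                      \<le> traj_loss T (x i) h (th (r-1)) (ph (r-1) k))
           \<longrightarrow> es r i = es (r-1) i)) \<and>
    (\<forall>r\<in>{1..Tr}. (th r, ph r) \<in> argmin_R T N M x h \<Omega> lam (es r))"

end

theory Submission
  imports Defs
begin

text \<open>Each round first reassigns every trajectory to an environment of minimal loss under the
  current parameters, which cannot increase the objective, and then globally minimises the new
  objective, which cannot increase it either. All global minimisers of a fixed R_e share one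
  value, so after the first round the objective only takes values in the finite set of these
  minimal values, one per assignment in [M]^N; a strict decrease is therefore at least the
  smallest positive gap in that set.\<close>

lemma finite_imp_uniform_gap:
  fixes V :: "'a::linordered_idom set"
  assumes "finite V"
  shows "\<exists>C>0. \<forall>a\<in>V. \<forall>b\<in>V. b < a \<longrightarrow> b \<le> a - C"
proof -
  define D where "D = {a - b | a b. a \<in> V \<and> b \<in> V \<and> b < a}"
  have "D \<subseteq> (\<lambda>(a, b). a - b) ` (V \<times> V)"
    unfolding D_def by auto
  then have "finite D"
    using assms finite_subset by blast
  show ?thesis
  proof (cases "D = {}")
    case True
    then show ?thesis
      unfolding D_def by (intro exI[of _ 1]) auto
  next
    case False
    have "Min D \<in> D"
      using False \<open>finite D\<close> by simp
    then have "Min D > 0"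
      unfolding D_def by auto
    moreover have "Min D \<le> a - b" if "a \<in> V" "b \<in> V" "b < a" for a b
      using that \<open>finite D\<close> unfolding D_def by (intro Min_le) auto
    ultimately show ?thesis
      by (intro exI[of _ "Min D"]) (auto simp: algebra_simps)
  qed
qed

lemma objective_restrict:
  "objective T N M x h \<Omega> lam (restrict e {1..N}) = objective T N M x h \<Omega> lam e"
  unfolding objective_def by (intro ext) (auto intro!: sum.cong)

lemma argmin_R_restrict:
  "argmin_R T N M x h \<Omega> lam (restrict e {1..N}) = argmin_R T N M x h \<Omega> lam e"
  unfolding argmin_R_def objective_restrict ..

lemma objective_argmin_R_eq:
  assumes "p \<in> argmin_R T N M x h \<Omega> lam e" and "q \<in> argmin_R T N M x h \<Omega> lam e"
  shows "objective T N M x h \<Omega> lam e (fst p) (snd p) = objective T N M x h \<Omega> lam e (fst q) (snd q)"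
  using assms unfolding argmin_R_def by (auto intro: order.antisym)

lemma objective_le_argmin_R:
  assumes "p \<in> argmin_R T N M x h \<Omega> lam e" and "q \<in> param_space M"
  shows "objective T N M x h \<Omega> lam e (fst p) (snd p) \<le> objective T N M x h \<Omega> lam e (fst q) (snd q)"
  using assms unfolding argmin_R_def by blast

lemma objective_mono_assignment:
  assumes "\<And>i. i \<in> {1..N} \<Longrightarrow> traj_loss T (x i) h \<theta> (\<phi> (e' i)) \<le> traj_loss T (x i) h \<theta> (\<phi> (e i))"
  shows "objective T N M x h \<Omega> lam e' \<theta> \<phi> \<le> objective T N M x h \<Omega> lam e \<theta> \<phi>"
  unfolding objective_def using assms by (intro add_right_mono sum_mono) auto

definition minimal_objective_values ::
  "real \<Rightarrow> nat \<Rightarrow> nat \<Rightarrow> (nat \<Rightarrow> real \<Rightarrow> 'a::real_normed_vector) \<Rightarrow> ('a \<Rightarrow> 'p \<Rightarrow> 'q \<Rightarrow> 'a)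
     \<Rightarrow> ('q \<Rightarrow> real) \<Rightarrow> real \<Rightarrow> real set"
  where "minimal_objective_values T N M x h \<Omega> lam =
    (\<Union>e \<in> {1..N} \<rightarrow>\<^sub>E {1..M}.
       (\<lambda>p. objective T N M x h \<Omega> lam e (fst p) (snd p)) ` argmin_R T N M x h \<Omega> lam e)"

lemma finite_minimal_objective_values: "finite (minimal_objective_values T N M x h \<Omega> lam)"
proof -
  have "finite ((\<lambda>p. objective T N M x h \<Omega> lam e (fst p) (snd p)) ` argmin_R T N M x h \<Omega> lam e)"
    for e
  proof (cases "argmin_R T N M x h \<Omega> lam e = {}")
    case False
    then obtain p where "p \<in> argmin_R T N M x h \<Omega> lam e"
      by blast
    then have "(\<lambda>p. objective T N M x h \<Omega> lam e (fst p) (snd p)) ` argmin_R T N M x h \<Omega> lam e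
               \<subseteq> {objective T N M x h \<Omega> lam e (fst p) (snd p)}"
      using objective_argmin_R_eq by blast
    then show ?thesis
      using finite_subset by blast
  qed simp
  then show ?thesis
    unfolding minimal_objective_values_def by (intro finite_UN_I finite_PiE) auto
qed

lemma alt_run_argmin_R:
  assumes "alt_run T N M x h \<Omega> lam Tr th ph es" and "r \<in> {1..Tr}"
  shows "(th r, ph r) \<in> argmin_R T N M x h \<Omega> lam (es r)"
  using assms unfolding alt_run_def by blast

lemma alt_run_assignment_range:
  assumes "alt_run T N M x h \<Omega> lam Tr th ph es" and "r \<le> Tr" and "i \<in> {1..N}"
  shows "es r i \<in> {1..M}"
  using assms unfolding alt_run_def by (cases r) auto

lemma alt_run_assignment_minimal:
  assumes "alt_run T N M x h \<Omega> lam Tr th ph es" and "r < Tr" and "i \<in> {1..N}" and "k \<in> {1..M}"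
  shows "traj_loss T (x i) h (th r) (ph r (es (Suc r) i)) \<le> traj_loss T (x i) h (th r) (ph r k)"
proof -
  have "Suc r \<in> {1..Tr}"
    using assms(2) by simp
  then show ?thesis
    using assms(1,3,4) unfolding alt_run_def by fastforce
qed

lemma alt_run_objective_decreasing:
  assumes run: "alt_run T N M x h \<Omega> lam Tr th ph es" and "1 \<le> r" and "r < Tr"
  shows "objective T N M x h \<Omega> lam (es (Suc r)) (th (Suc r)) (ph (Suc r))
           \<le> objective T N M x h \<Omega> lam (es r) (th r) (ph r)"
proof -
  have "r \<in> {1..Tr}" and "Suc r \<in> {1..Tr}"
    using assms(2,3) by auto
  have "(th r, ph r) \<in> param_space M"
    using alt_run_argmin_R[OF run \<open>r \<in> {1..Tr}\<close>] unfolding argmin_R_def by auto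
  from objective_le_argmin_R[OF alt_run_argmin_R[OF run \<open>Suc r \<in> {1..Tr}\<close>] this]
  have "objective T N M x h \<Omega> lam (es (Suc r)) (th (Suc r)) (ph (Suc r))
          \<le> objective T N M x h \<Omega> lam (es (Suc r)) (th r) (ph r)"
    by simp
  also have "\<dots> \<le> objective T N M x h \<Omega> lam (es r) (th r) (ph r)"
    using assms(3) by (intro objective_mono_assignment alt_run_assignment_minimal[OF run]
        alt_run_assignment_range[OF run]) auto
  finally show ?thesis .
qed

lemma alt_run_objective_in_minimal_values:
  assumes run: "alt_run T N M x h \<Omega> lam Tr th ph es" and "r \<in> {1..Tr}"
  shows "objective T N M x h \<Omega> lam (es r) (th r) (ph r) \<in> minimal_objective_values T N M x h \<Omega> lam"
proof -
  let ?e = "restrict (es r) {1..N}"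
  have "?e \<in> {1..N} \<rightarrow>\<^sub>E {1..M}"
    using alt_run_assignment_range[OF run] assms(2) by auto
  moreover have "(th r, ph r) \<in> argmin_R T N M x h \<Omega> lam ?e"
    unfolding argmin_R_restrict using alt_run_argmin_R[OF assms] .
  ultimately show ?thesis
    unfolding minimal_objective_values_def objective_restrict[symmetric, of _ _ _ _ _ _ _ "es r"]
    by force
qed

theorem proposition1:
  fixes T :: real and N M :: nat
    and x :: "nat \<Rightarrow> real \<Rightarrow> 'a::real_inner"
    and h :: "'a \<Rightarrow> 'p \<Rightarrow> 'q \<Rightarrow> 'a"
    and \<Omega> :: "'q \<Rightarrow> real" and lam :: real
  assumes "T > 0" and "N \<ge> 1" and "M \<ge> 1" and "lam \<ge> 0"
    and diff: "\<forall>i\<in>{1..N}. \<forall>t\<in>{0..T}. x i differentiable (at t within {0..T})"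
    and finite_loss: "\<forall>i\<in>{1..N}. \<forall>\<theta> \<phi>.
        (\<lambda>t. (norm (vector_derivative (x i) (at t within {0..T}) - h (x i t) \<theta> \<phi>))\<^sup>2)
          integrable_on {0..T}"
    and attained: "\<forall>e\<in>{1..N} \<rightarrow> {1..M}. argmin_R T N M x h \<Omega> lam e \<noteq> {}"
  shows
    "(\<forall>Tr th ph es. alt_run T N M x h \<Omega> lam Tr th ph es \<longrightarrow>
        (\<forall>r. 1 \<le> r \<and> r < Tr \<longrightarrow>
           objective T N M x h \<Omega> lam (es (r+1)) (th (r+1)) (ph (r+1))
             \<le> objective T N M x h \<Omega> lam (es r) (th r) (ph r)))
     \<and>
     ((\<forall>e\<in>{1..N} \<rightarrow> {1..M}. finite (argmin_R T N M x h \<Omega> lam e)) \<longrightarrow>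
      (\<exists>C>0. \<forall>Tr th ph es. alt_run T N M x h \<Omega> lam Tr th ph es \<longrightarrow>
        (\<forall>r. 1 < r \<and> r < Tr \<and>
           objective T N M x h \<Omega> lam (es (r+1)) (th (r+1)) (ph (r+1))
             < objective T N M x h \<Omega> lam (es r) (th r) (ph r) \<longrightarrow>
           objective T N M x h \<Omega> lam (es (r+1)) (th (r+1)) (ph (r+1))
             \<le> objective T N M x h \<Omega> lam (es r) (th r) (ph r) - C)))"
proof -
  obtain C where "C > 0" and gap: "\<And>a b. a \<in> minimal_objective_values T N M x h \<Omega> lam \<Longrightarrow>
      b \<in> minimal_objective_values T N M x h \<Omega> lam \<Longrightarrow> b < a \<Longrightarrow> b \<le> a - C"
    using finite_imp_uniform_gap[OF finite_minimal_objective_values[of T N M x h \<Omega> lam]] by blast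
  have "objective T N M x h \<Omega> lam (es (Suc r)) (th (Suc r)) (ph (Suc r))
          \<le> objective T N M x h \<Omega> lam (es r) (th r) (ph r) - C"
    if run: "alt_run T N M x h \<Omega> lam Tr th ph es" and "1 < r" "r < Tr"
      and "objective T N M x h \<Omega> lam (es (Suc r)) (th (Suc r)) (ph (Suc r))
             < objective T N M x h \<Omega> lam (es r) (th r) (ph r)" for Tr th ph es r
    using that by (intro gap alt_run_objective_in_minimal_values[OF run]) auto
  then show ?thesis
    using alt_run_objective_decreasing \<open>C > 0\<close> by auto
qed

end
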